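(* Consider two patches with $p=d_{12}\in(0,1)$, $q=d_{21}\in(0,1)$ and a random environment $(w_n)_{n\ge0}$ which is a stationary Markov chain on $\{e_1,e_2\}$ with $\mathbb P(w_{n+1}=e_2\mid w_n=e_1)=\alpha\in(0,1]$ and $\mathbb P(w_{n+1}=e_1\mid w_n=e_2)=\beta\in(0,1]$, so that $\nu:=\beta/(\alpha+\beta)$ is the stationary probability of $e_1$. Let $M_1=m_1(e_1)>0$ and $m_2=m_2(e_2)>0$, all other means being positive and finite. Then the Lyapunov exponent $$\gamma=\lim_{n\to\infty}\frac1n\log\|A(w_n)A(w_{n-1})\cdots A(w_0)\|$$ (which exists a.s. and is deterministic) satisfies $$ \gamma\ge \nu\log M_1+(1-\nu)\log m_2+\nu\alpha\log(pq)+\nu(1-\alpha)\log(1-p)+(1-\nu)(1-\beta)\log(1-q). $$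
   Context: For an environment state $w$, $m_i(w)$ is the mean offspring number of an individual living in patch $i$ and $A(w)$ is the $2\times2$ mean offspring matrix $A(w)_{ij}=m_i(w)d_{ij}$, with $d_{11}=1-p$, $d_{12}=p$, $d_{21}=q$, $d_{22}=1-q$. $\|\cdot\|$ denotes the maximum row sum norm. The environment affects all patches simultaneously at each generation, and the population process is a multitype branching process in random environment whose growth rate satisfies $\log\rho=\gamma$. *)

theory Defs
  imports "HOL-Probability.Probability"
begin

datatype env = E1 | E2

definition dmat :: "real \<Rightarrow> real \<Rightarrow> real^2^2" where
  "dmat p q = (\<chi> i j. if i = 1 then (if j = 1 then 1 - p else p)
                         else (if j = 1 then q else 1 - q))"

definition Amat :: "(env \<Rightarrow> 2 \<Rightarrow> real) \<Rightarrow> real \<Rightarrow> real \<Rightarrow> env \<Rightarrow> real^2^2" where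
  "Amat m p q w = (\<chi> i j. m w i * dmat p q $ i $ j)"

fun prodA :: "(env \<Rightarrow> 2 \<Rightarrow> real) \<Rightarrow> real \<Rightarrow> real \<Rightarrow> (nat \<Rightarrow> env) \<Rightarrow> nat \<Rightarrow> real^2^2" where
  "prodA m p q w 0 = Amat m p q (w 0)"
| "prodA m p q w (Suc n) = Amat m p q (w (Suc n)) ** prodA m p q w n"

definition rownorm :: "real^2^2 \<Rightarrow> real" where
  "rownorm B = Max (range (\<lambda>i. \<Sum>j\<in>UNIV. \<bar>B $ i $ j\<bar>))"

definition init_law :: "real \<Rightarrow> real \<Rightarrow> env \<Rightarrow> real" where
  "init_law \<alpha> \<beta> s = (if s = E1 then \<beta> / (\<alpha> + \<beta>) else \<alpha> / (\<alpha> + \<beta>))"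

definition trans_prob :: "real \<Rightarrow> real \<Rightarrow> env \<Rightarrow> env \<Rightarrow> real" where
  "trans_prob \<alpha> \<beta> s t =
     (if s = E1 then (if t = E2 then \<alpha> else 1 - \<alpha>)
      else (if t = E1 then \<beta> else 1 - \<beta>))"

definition stationary_env_chain ::
  "'a measure \<Rightarrow> (nat \<Rightarrow> 'a \<Rightarrow> env) \<Rightarrow> real \<Rightarrow> real \<Rightarrow> bool" where
  "stationary_env_chain M w \<alpha> \<beta> \<longleftrightarrow>
     (\<forall>n. w n \<in> measurable M (count_space UNIV)) \<and>
     (\<forall>n (xs :: nat \<Rightarrow> env).
        measure M {\<omega> \<in> space M. \<forall>i\<le>n. w i \<omega> = xs i}
        = init_law \<alpha> \<beta> (xs 0) * (\<Prod>i<n. trans_prob \<alpha> \<beta> (xs i) (xs (Suc i))))"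

end

theory Submission
  imports Defs
begin

text \<open>
  The row-sum norm of \<open>A(w n) \<cdots> A(w 0)\<close> dominates its entry \<open>(i n, i 0)\<close>, where \<open>i t\<close> is the
  patch favoured by \<open>w t\<close> (patch 1 under \<open>e1\<close>, patch 2 under \<open>e2\<close>), and that entry dominates
  the product of the matrix entries along the patch path \<open>i 0, \<dots>, i n\<close>. Up to a bounded term
  its logarithm is an additive functional \<open>\<Sum>t<n. g (w t) (w (t+1))\<close> of the environment chain,
  and the stationary mean of \<open>g\<close> is exactly the right-hand side of the bound. A strong law of
  large numbers for this functional finishes the proof: the centred sum has second moment
  \<open>O(n)\<close>, so Chebyshev and Borel--Cantelli control it along the squares, and bounded
  increments fill the gaps between consecutive squares.
\<close>

lemma UNIV_env: "(UNIV :: env set) = {E1, E2}"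
  using env.exhaust by auto

lemma finite_UNIV_env [simp]: "finite (UNIV :: env set)"
  by (simp add: UNIV_env)

lemma sum_UNIV_env: "(\<Sum>y\<in>UNIV. f y) = f E1 + f E2"
  by (simp add: UNIV_env)

subsection \<open>Expectations of functions of the first states of the chain\<close>

definition env_paths :: "nat \<Rightarrow> (nat \<Rightarrow> env) set" where
  "env_paths n = PiE {..n} (\<lambda>_. UNIV)"

definition path_prob :: "real \<Rightarrow> real \<Rightarrow> nat \<Rightarrow> (nat \<Rightarrow> env) \<Rightarrow> real" where
  "path_prob a b n xs = init_law a b (xs 0) * (\<Prod>i<n. trans_prob a b (xs i) (xs (Suc i)))"

definition path_expectation :: "real \<Rightarrow> real \<Rightarrow> nat \<Rightarrow> ((nat \<Rightarrow> env) \<Rightarrow> real) \<Rightarrow> real" where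
  "path_expectation a b n \<Phi> = (\<Sum>xs\<in>env_paths n. \<Phi> xs * path_prob a b n xs)"

lemma finite_env_paths: "finite (env_paths n)"
  unfolding env_paths_def by (intro finite_PiE) auto

lemma env_paths_0: "env_paths 0 = (\<lambda>y. (\<lambda>_. undefined)(0 := y)) ` UNIV"
proof -
  have "x = (\<lambda>_. undefined)(0 := x 0)" if "\<forall>i>0. x i = undefined" for x :: "nat \<Rightarrow> env"
    using that by (intro ext) auto
  then show ?thesis unfolding env_paths_def by (auto simp: PiE_def extensional_def)
qed

lemma env_paths_Suc: "env_paths (Suc n) = (\<lambda>(y, g). g(Suc n := y)) ` (UNIV \<times> env_paths n)"
  unfolding env_paths_def atMost_Suc by (rule PiE_insert_eq)

lemma inj_on_env_paths_Suc: "inj_on (\<lambda>(y, g). g(Suc n := y)) (UNIV \<times> env_paths n)"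
proof (rule inj_onI, clarsimp)
  fix y g y' g'
  assume g: "g \<in> env_paths n" and g': "g' \<in> env_paths n" and eq: "g(Suc n := y) = g'(Suc n := y')"
  have "y = y'" using fun_cong[OF eq, of "Suc n"] by simp
  moreover have "g = g'"
  proof (rule PiE_ext[OF g[unfolded env_paths_def] g'[unfolded env_paths_def]])
    fix i assume "i \<in> {..n}"
    then show "g i = g' i" using fun_cong[OF eq, of i] by auto
  qed
  ultimately show "y = y' \<and> g = g'" by simp
qed

lemma path_prob_upd:
  "path_prob a b (Suc n) (g(Suc n := y)) = path_prob a b n g * trans_prob a b (g n) y"
proof -
  have "(\<Prod>i<n. trans_prob a b ((g(Suc n := y)) i) ((g(Suc n := y)) (Suc i)))
      = (\<Prod>i<n. trans_prob a b (g i) (g (Suc i)))"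
    by (intro prod.cong) auto
  then show ?thesis unfolding path_prob_def by (simp add: prod.lessThan_Suc)
qed

lemma path_prob_nonneg:
  assumes "0 \<le> a" "a \<le> 1" "0 \<le> b" "b \<le> 1"
  shows "0 \<le> path_prob a b n xs"
  using assms unfolding path_prob_def init_law_def trans_prob_def
  by (intro mult_nonneg_nonneg prod_nonneg) auto

lemma path_expectation_0:
  "path_expectation a b 0 \<Phi> = (\<Sum>y\<in>UNIV. init_law a b y * \<Phi> ((\<lambda>_. undefined)(0 := y)))"
proof -
  have "inj (\<lambda>y. ((\<lambda>_. undefined)(0 := y)) :: nat \<Rightarrow> env)"
    by (rule injI) (metis fun_upd_same)
  then show ?thesis unfolding path_expectation_def env_paths_0 path_prob_def
    by (subst sum.reindex) (auto simp: mult_ac)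
qed

lemma path_expectation_Suc:
  "path_expectation a b (Suc n) \<Phi>
   = path_expectation a b n (\<lambda>g. \<Sum>y\<in>UNIV. trans_prob a b (g n) y * \<Phi> (g(Suc n := y)))"
proof -
  have "path_expectation a b (Suc n) \<Phi>
      = (\<Sum>(y, g)\<in>UNIV \<times> env_paths n. \<Phi> (g(Suc n := y)) * path_prob a b (Suc n) (g(Suc n := y)))"
    unfolding path_expectation_def env_paths_Suc
    by (subst sum.reindex[OF inj_on_env_paths_Suc]) (simp add: case_prod_unfold)
  also have "\<dots> = (\<Sum>g\<in>env_paths n. \<Sum>y\<in>UNIV. \<Phi> (g(Suc n := y)) * path_prob a b (Suc n) (g(Suc n := y)))"
    by (subst sum.cartesian_product[symmetric]) (rule sum.swap)
  also have "\<dots> = path_expectation a b n (\<lambda>g. \<Sum>y\<in>UNIV. trans_prob a b (g n) y * \<Phi> (g(Suc n := y)))"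
    unfolding path_expectation_def path_prob_upd
    by (intro sum.cong refl) (simp add: sum_distrib_left mult_ac)
  finally show ?thesis .
qed

lemma path_expectation_add:
  "path_expectation a b n (\<lambda>x. f x + h x) = path_expectation a b n f + path_expectation a b n h"
  unfolding path_expectation_def by (simp add: sum.distrib distrib_right)

lemma path_expectation_cmult:
  "path_expectation a b n (\<lambda>x. c * f x) = c * path_expectation a b n f"
  unfolding path_expectation_def by (simp add: sum_distrib_left mult_ac)

lemma path_expectation_cong:
  "(\<And>x. f x = h x) \<Longrightarrow> path_expectation a b n f = path_expectation a b n h"
  by (simp add: path_expectation_def)

lemma path_expectation_mono:
  assumes "0 \<le> a" "a \<le> 1" "0 \<le> b" "b \<le> 1" and "\<And>x. f x \<le> h x"
  shows "path_expectation a b n f \<le> path_expectation a b n h"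
  unfolding path_expectation_def using assms
  by (intro sum_mono mult_right_mono path_prob_nonneg) auto

lemma path_expectation_split_last:
  "path_expectation a b n f
   = path_expectation a b n (\<lambda>x. if x n = E1 then f x else 0)
   + path_expectation a b n (\<lambda>x. if x n = E2 then f x else 0)"
proof (subst path_expectation_add[symmetric], rule path_expectation_cong)
  show "f x = (if x n = E1 then f x else 0) + (if x n = E2 then f x else 0)" for x
    by (cases "x n") simp_all
qed

lemma path_expectation_Suc_last:
  "path_expectation a b (Suc n) (\<lambda>x. if x (Suc n) = e then f x else 0)
   = trans_prob a b E1 e * path_expectation a b n (\<lambda>x. if x n = E1 then f (x(Suc n := e)) else 0)
   + trans_prob a b E2 e * path_expectation a b n (\<lambda>x. if x n = E2 then f (x(Suc n := e)) else 0)"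
proof -
  have "path_expectation a b (Suc n) (\<lambda>x. if x (Suc n) = e then f x else 0)
     = path_expectation a b n (\<lambda>g. trans_prob a b (g n) e * f (g(Suc n := e)))"
    by (subst path_expectation_Suc, rule path_expectation_cong) (cases e; simp add: sum_UNIV_env)
  also have "\<dots> = path_expectation a b n (\<lambda>x. trans_prob a b E1 e * (if x n = E1 then f (x(Suc n := e)) else 0))
                + path_expectation a b n (\<lambda>x. trans_prob a b E2 e * (if x n = E2 then f (x(Suc n := e)) else 0))"
    by (subst path_expectation_split_last) (intro arg_cong2[where f="(+)"] path_expectation_cong; simp)
  finally show ?thesis by (simp add: path_expectation_cmult)
qed

lemma init_law_stationary:
  assumes "a + b \<noteq> 0"
  shows "trans_prob a b E1 e * init_law a b E1 + trans_prob a b E2 e * init_law a b E2 = init_law a b e"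
proof (cases e)
  case E1
  have "(1 - a) * (b / (a + b)) + b * (a / (a + b)) = ((1 - a) * b + b * a) / (a + b)"
    by (simp add: add_divide_distrib)
  then show ?thesis using E1 by (simp add: init_law_def trans_prob_def algebra_simps)
next
  case E2
  have "a * (b / (a + b)) + (1 - b) * (a / (a + b)) = (a * b + (1 - b) * a) / (a + b)"
    by (simp add: add_divide_distrib)
  then show ?thesis using E2 by (simp add: init_law_def trans_prob_def algebra_simps)
qed

lemma path_expectation_last_state:
  assumes "a + b \<noteq> 0"
  shows "path_expectation a b n (\<lambda>x. if x n = e then 1 else 0) = init_law a b e"
proof (induction n arbitrary: e)
  case 0
  then show ?case unfolding path_expectation_0 by (cases e) (simp_all add: sum_UNIV_env)
next
  case (Suc n)
  then show ?case
    using init_law_stationary[OF assms] by (subst path_expectation_Suc_last) simp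
qed

subsection \<open>Second moments of an additive functional of the chain\<close>

definition path_sum :: "(env \<Rightarrow> env \<Rightarrow> real) \<Rightarrow> nat \<Rightarrow> (nat \<Rightarrow> env) \<Rightarrow> real" where
  "path_sum g n x = (\<Sum>t<n. g (x t) (x (Suc t)))"

lemma path_sum_upd: "path_sum g (Suc n) (x(Suc n := e)) = path_sum g n x + g (x n) e"
proof -
  have "(\<Sum>t<n. g ((x(Suc n := e)) t) ((x(Suc n := e)) (Suc t))) = (\<Sum>t<n. g (x t) (x (Suc t)))"
    by (intro sum.cong) auto
  then show ?thesis unfolding path_sum_def by simp
qed

lemma path_sum_restrict: "path_sum g n (restrict x {..n}) = path_sum g n x"
  unfolding path_sum_def by (intro sum.cong) auto

definition stationary_mean :: "real \<Rightarrow> real \<Rightarrow> (env \<Rightarrow> env \<Rightarrow> real) \<Rightarrow> real" where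
  "stationary_mean a b g = (\<Sum>u\<in>UNIV. \<Sum>e\<in>UNIV. init_law a b u * trans_prob a b u e * g u e)"

locale env_chain_functional =
  fixes a b :: real and g :: "env \<Rightarrow> env \<Rightarrow> real"
  assumes a_pos: "0 < a" and a_le_1: "a \<le> 1" and b_pos: "0 < b" and b_le_1: "b \<le> 1"
begin

abbreviation "\<mu> \<equiv> stationary_mean a b g"
abbreviation "\<nu>1 \<equiv> init_law a b E1"
abbreviation "\<nu>2 \<equiv> init_law a b E2"

lemma a_plus_b_pos: "0 < a + b"
  using a_pos b_pos by simp

lemma init_law_sum: "\<nu>1 + \<nu>2 = 1"
  using a_plus_b_pos by (simp add: init_law_def add_divide_distrib[symmetric] add.commute)

lemma init_law_bounds: "0 \<le> init_law a b e" "init_law a b e \<le> 1"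
  using a_pos b_pos by (auto simp: init_law_def)

lemma trans_prob_bounds: "0 \<le> trans_prob a b u e" "trans_prob a b u e \<le> 1"
  using a_pos b_pos a_le_1 b_le_1 by (auto simp: trans_prob_def)

lemma stationary_increment_mean_zero:
  "(1-a) * (g E1 E1 - \<mu>) * \<nu>1 + a * (g E1 E2 - \<mu>) * \<nu>1
   + b * (g E2 E1 - \<mu>) * \<nu>2 + (1-b) * (g E2 E2 - \<mu>) * \<nu>2 = 0"
proof -
  have "\<mu> = (1-a) * g E1 E1 * \<nu>1 + a * g E1 E2 * \<nu>1 + b * g E2 E1 * \<nu>2 + (1-b) * g E2 E2 * \<nu>2"
    unfolding stationary_mean_def by (simp add: sum_UNIV_env trans_prob_def mult_ac)
  then show ?thesis using init_law_sum by algebra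
qed

definition deviation :: "nat \<Rightarrow> (nat \<Rightarrow> env) \<Rightarrow> real" where
  "deviation n x = path_sum g n x - real n * \<mu>"

lemma deviation_restrict: "deviation n (restrict x {..n}) = deviation n x"
  by (simp add: deviation_def path_sum_restrict)

lemma deviation_Suc: "deviation (Suc n) x = deviation n x + (g (x n) (x (Suc n)) - \<mu>)"
  by (simp add: deviation_def path_sum_def algebra_simps)

lemma abs_deviation_increment_le:
  "\<bar>deviation (Suc n) x - deviation n x\<bar> \<le> (\<Sum>u\<in>UNIV. \<Sum>e\<in>UNIV. \<bar>g u e - \<mu>\<bar>)"
proof -
  have "\<bar>g u e - \<mu>\<bar> \<le> (\<Sum>e\<in>UNIV. \<bar>g u e - \<mu>\<bar>)" for u e
    by (rule member_le_sum) auto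
  also have "(\<Sum>e\<in>UNIV. \<bar>g u e - \<mu>\<bar>) \<le> (\<Sum>u\<in>UNIV. \<Sum>e\<in>UNIV. \<bar>g u e - \<mu>\<bar>)" for u
    by (rule member_le_sum[where f="\<lambda>u. \<Sum>e\<in>UNIV. \<bar>g u e - \<mu>\<bar>"]) (auto intro: sum_nonneg)
  finally show ?thesis by (simp add: deviation_Suc)
qed

lemma deviation_upd_last:
  "(\<lambda>x. if x n = u then h (deviation (Suc n) (x(Suc n := e))) else 0)
   = (\<lambda>x. if x n = u then h (deviation n x + (g u e - \<mu>)) else 0)"
  by (rule ext) (simp add: deviation_def path_sum_upd algebra_simps)

lemma path_expectation_last_add:
  "path_expectation a b n (\<lambda>x. if x n = e then f x + k else 0)
   = path_expectation a b n (\<lambda>x. if x n = e then f x else 0) + k * init_law a b e"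
proof -
  have "path_expectation a b n (\<lambda>x. if x n = e then f x + k else 0)
      = path_expectation a b n (\<lambda>x. (if x n = e then f x else 0) + k * (if x n = e then 1 else 0))"
    by (rule path_expectation_cong) simp
  then show ?thesis
    using path_expectation_last_state a_plus_b_pos
    by (simp add: path_expectation_add path_expectation_cmult)
qed

lemma path_expectation_last_add_sq:
  "path_expectation a b n (\<lambda>x. if x n = e then (f x + k)\<^sup>2 else 0)
   = path_expectation a b n (\<lambda>x. if x n = e then (f x)\<^sup>2 else 0)
     + 2 * k * path_expectation a b n (\<lambda>x. if x n = e then f x else 0) + k\<^sup>2 * init_law a b e"
proof -
  have "path_expectation a b n (\<lambda>x. if x n = e then (f x + k)\<^sup>2 else 0)
      = path_expectation a b n (\<lambda>x. (if x n = e then (f x)\<^sup>2 else 0)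
          + ((2 * k) * (if x n = e then f x else 0) + k\<^sup>2 * (if x n = e then 1 else 0)))"
    by (rule path_expectation_cong) (simp add: power2_eq_square algebra_simps)
  then show ?thesis
    using path_expectation_last_state a_plus_b_pos
    by (simp add: path_expectation_add path_expectation_cmult)
qed

definition first_moment :: "nat \<Rightarrow> env \<Rightarrow> real" where
  "first_moment n e = path_expectation a b n (\<lambda>x. if x n = e then deviation n x else 0)"

definition second_moment :: "nat \<Rightarrow> env \<Rightarrow> real" where
  "second_moment n e = path_expectation a b n (\<lambda>x. if x n = e then (deviation n x)\<^sup>2 else 0)"

lemma first_moment_Suc:
  "first_moment (Suc n) e
   = trans_prob a b E1 e * (first_moment n E1 + (g E1 e - \<mu>) * \<nu>1)
   + trans_prob a b E2 e * (first_moment n E2 + (g E2 e - \<mu>) * \<nu>2)"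
  unfolding first_moment_def
  by (subst path_expectation_Suc_last)
     (simp add: deviation_upd_last[where h="\<lambda>x. x"] path_expectation_last_add)

lemma second_moment_Suc:
  "second_moment (Suc n) e
   = trans_prob a b E1 e * (second_moment n E1 + 2 * (g E1 e - \<mu>) * first_moment n E1 + (g E1 e - \<mu>)\<^sup>2 * \<nu>1)
   + trans_prob a b E2 e * (second_moment n E2 + 2 * (g E2 e - \<mu>) * first_moment n E2 + (g E2 e - \<mu>)\<^sup>2 * \<nu>2)"
  unfolding first_moment_def second_moment_def
  by (subst path_expectation_Suc_last)
     (simp add: deviation_upd_last[where h="\<lambda>x. x\<^sup>2"] path_expectation_last_add_sq)

definition first_moment_drift :: real where
  "first_moment_drift = (1-a) * (g E1 E1 - \<mu>) * \<nu>1 + b * (g E2 E1 - \<mu>) * \<nu>2"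

lemma first_moment_closed_form:
  "first_moment n E1 = first_moment_drift * (1 - (1-a-b)^n) / (a+b) \<and> first_moment n E2 = - first_moment n E1"
proof (induction n)
  case 0
  then show ?case
    unfolding first_moment_def path_expectation_0 by (simp add: sum_UNIV_env deviation_def path_sum_def)
next
  case (Suc n)
  define K where "K = first_moment_drift * (1 - (1-a-b)^n) / (a+b)"
  have IH1: "first_moment n E1 = K" and IH2: "first_moment n E2 = - K"
    using Suc.IH K_def by auto
  have step1: "first_moment (Suc n) E1
      = (1-a) * (first_moment n E1 + (g E1 E1 - \<mu>) * \<nu>1) + b * (first_moment n E2 + (g E2 E1 - \<mu>) * \<nu>2)"
    by (subst first_moment_Suc) (simp add: trans_prob_def)
  have step2: "first_moment (Suc n) E2
      = a * (first_moment n E1 + (g E1 E2 - \<mu>) * \<nu>1) + (1-b) * (first_moment n E2 + (g E2 E2 - \<mu>) * \<nu>2)"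
    by (subst first_moment_Suc) (simp add: trans_prob_def)
  have "first_moment (Suc n) E1 = (1-a-b) * K + first_moment_drift"
    unfolding step1 IH1 IH2 by (simp add: first_moment_drift_def algebra_simps)
  also have "\<dots> = first_moment_drift * (1 - (1-a-b)^Suc n) / (a+b)"
    using a_plus_b_pos unfolding K_def by (simp add: field_simps)
  finally have "first_moment (Suc n) E1 = first_moment_drift * (1 - (1-a-b)^Suc n) / (a+b)" .
  moreover have "first_moment (Suc n) E2 = - first_moment (Suc n) E1"
    unfolding step1 step2 IH1 IH2 using stationary_increment_mean_zero by algebra
  ultimately show ?case by simp
qed

definition first_moment_bound :: real where
  "first_moment_bound = 2 * \<bar>first_moment_drift\<bar> / (a + b)"

lemma abs_first_moment_le: "\<bar>first_moment n e\<bar> \<le> first_moment_bound"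
proof -
  have "\<bar>1 - a - b\<bar> \<le> 1" using a_pos b_pos a_le_1 b_le_1 by simp
  then have "\<bar>(1-a-b)^n\<bar> \<le> 1" by (simp add: power_abs power_le_one)
  then have "\<bar>1 - (1-a-b)^n\<bar> \<le> 2" by linarith
  then have "\<bar>first_moment_drift * (1 - (1-a-b)^n)\<bar> \<le> 2 * \<bar>first_moment_drift\<bar>"
    unfolding abs_mult by (simp add: mult_left_le mult.commute[of 2] mult_left_mono)
  then have "\<bar>first_moment n E1\<bar> \<le> first_moment_bound"
    using first_moment_closed_form a_plus_b_pos
    by (simp add: first_moment_bound_def abs_divide divide_right_mono)
  then show ?thesis using first_moment_closed_form by (cases e) auto
qed

definition variance_rate :: real where
  "variance_rate = (\<Sum>u\<in>UNIV. \<Sum>e\<in>UNIV. 2 * \<bar>g u e - \<mu>\<bar> * first_moment_bound + (g u e - \<mu>)\<^sup>2)"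

lemma second_moment_increment_le:
  assumes "0 \<le> t" "t \<le> 1" "0 \<le> v" "v \<le> 1" "\<bar>D\<bar> \<le> first_moment_bound"
  shows "t * (2 * h * D + h\<^sup>2 * v) \<le> 2 * \<bar>h\<bar> * first_moment_bound + h\<^sup>2"
proof -
  have "\<bar>2 * h * D\<bar> \<le> 2 * \<bar>h\<bar> * first_moment_bound"
    using assms(5) by (simp add: abs_mult mult_left_mono)
  moreover have "0 \<le> h\<^sup>2 * v" "h\<^sup>2 * v \<le> h\<^sup>2"
    using assms(3,4) by (simp_all add: mult_left_le)
  ultimately have bound: "\<bar>2 * h * D + h\<^sup>2 * v\<bar> \<le> 2 * \<bar>h\<bar> * first_moment_bound + h\<^sup>2"
    by linarith
  have "t * (2 * h * D + h\<^sup>2 * v) \<le> \<bar>2 * h * D + h\<^sup>2 * v\<bar>"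
    using assms(1,2) by (metis abs_ge_self abs_mult abs_of_nonneg dual_order.trans mult_left_le_one_le abs_ge_zero)
  then show ?thesis using bound by linarith
qed

lemma second_moment_sum_le: "second_moment n E1 + second_moment n E2 \<le> variance_rate * real n"
proof (induction n)
  case 0
  then show ?case
    unfolding second_moment_def path_expectation_0 by (simp add: sum_UNIV_env deviation_def path_sum_def)
next
  case (Suc n)
  let ?X = "\<lambda>u e v. trans_prob a b u e * (2 * (g u e - \<mu>) * first_moment n u + (g u e - \<mu>)\<^sup>2 * v)"
  have step: "second_moment (Suc n) E1 + second_moment (Suc n) E2
      = second_moment n E1 + second_moment n E2
        + (?X E1 E1 \<nu>1 + ?X E1 E2 \<nu>1 + ?X E2 E1 \<nu>2 + ?X E2 E2 \<nu>2)"
    unfolding second_moment_Suc by (simp add: trans_prob_def algebra_simps)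
  have X_le: "?X u e (init_law a b u) \<le> 2 * \<bar>g u e - \<mu>\<bar> * first_moment_bound + (g u e - \<mu>)\<^sup>2" for u e
    by (intro second_moment_increment_le trans_prob_bounds init_law_bounds abs_first_moment_le)
  have "?X E1 E1 \<nu>1 + ?X E1 E2 \<nu>1 + ?X E2 E1 \<nu>2 + ?X E2 E2 \<nu>2 \<le> variance_rate"
    unfolding variance_rate_def sum_UNIV_env
    using X_le[of E1 E1] X_le[of E1 E2] X_le[of E2 E1] X_le[of E2 E2] by linarith
  moreover have "variance_rate * real (Suc n) = variance_rate * real n + variance_rate"
    by (simp add: algebra_simps)
  ultimately show ?case using step Suc.IH by linarith
qed

lemma path_expectation_deviation_sq_le:
  "path_expectation a b n (\<lambda>x. (deviation n x)\<^sup>2) \<le> variance_rate * real n"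
proof -
  have "path_expectation a b n (\<lambda>x. (deviation n x)\<^sup>2) = second_moment n E1 + second_moment n E2"
    unfolding second_moment_def
    by (subst path_expectation_split_last) (intro arg_cong2[where f="(+)"] path_expectation_cong; simp)
  then show ?thesis using second_moment_sum_le by simp
qed

lemma path_expectation_large_deviation_le:
  assumes "0 < n" "0 < \<epsilon>"
  shows "path_expectation a b n (\<lambda>x. if real n * \<epsilon> \<le> \<bar>deviation n x\<bar> then 1 else 0)
         \<le> variance_rate / (real n * \<epsilon>\<^sup>2)"
proof -
  define r where "r = real n * \<epsilon>"
  have r_pos: "0 < r" unfolding r_def using assms by simp
  have "path_expectation a b n (\<lambda>x. if r \<le> \<bar>deviation n x\<bar> then 1 else 0)
      \<le> path_expectation a b n (\<lambda>x. inverse (r\<^sup>2) * (deviation n x)\<^sup>2)"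
  proof (rule path_expectation_mono)
    show "(if r \<le> \<bar>deviation n x\<bar> then 1 else 0) \<le> inverse (r\<^sup>2) * (deviation n x)\<^sup>2" for x
      using r_pos abs_le_square_iff[of r "deviation n x"]
      by (auto simp: field_simps)
  qed (use a_pos a_le_1 b_pos b_le_1 in auto)
  also have "\<dots> = inverse (r\<^sup>2) * path_expectation a b n (\<lambda>x. (deviation n x)\<^sup>2)"
    by (rule path_expectation_cmult)
  also have "\<dots> \<le> inverse (r\<^sup>2) * (variance_rate * real n)"
    by (intro mult_left_mono path_expectation_deviation_sq_le) simp
  also have "\<dots> = variance_rate / (real n * \<epsilon>\<^sup>2)"
    using assms unfolding r_def by (simp add: power2_eq_square field_simps)
  finally show ?thesis unfolding r_def .
qed

end

subsection \<open>A strong law of large numbers for the additive functional\<close>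

lemma disjoint_family_on_path_cylinders:
  "disjoint_family_on (\<lambda>xs. {\<omega>\<in>\<Omega>. \<forall>i\<le>n. w i \<omega> = xs i}) (env_paths n)"
proof -
  have "xs = ys" if "xs \<in> env_paths n" "ys \<in> env_paths n" "\<forall>i\<le>n. w i \<omega> = xs i" "\<forall>i\<le>n. w i \<omega> = ys i"
    for xs ys \<omega>
    by (rule PiE_ext[of _ "{..n}" "\<lambda>_. UNIV"]) (use that in \<open>auto simp: env_paths_def\<close>)
  then show ?thesis unfolding disjoint_family_on_def by blast
qed

lemma path_event_eq_Union_cylinders:
  "{\<omega>\<in>\<Omega>. Q (restrict (\<lambda>i. w i \<omega>) {..n})}
   = (\<Union>xs\<in>{xs\<in>env_paths n. Q xs}. {\<omega>\<in>\<Omega>. \<forall>i\<le>n. w i \<omega> = xs i})"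
proof (intro set_eqI iffI)
  fix \<omega> assume "\<omega> \<in> {\<omega>\<in>\<Omega>. Q (restrict (\<lambda>i. w i \<omega>) {..n})}"
  then show "\<omega> \<in> (\<Union>xs\<in>{xs\<in>env_paths n. Q xs}. {\<omega>\<in>\<Omega>. \<forall>i\<le>n. w i \<omega> = xs i})"
    by (intro UN_I[of "restrict (\<lambda>i. w i \<omega>) {..n}"]) (auto simp: env_paths_def)
next
  fix \<omega> assume "\<omega> \<in> (\<Union>xs\<in>{xs\<in>env_paths n. Q xs}. {\<omega>\<in>\<Omega>. \<forall>i\<le>n. w i \<omega> = xs i})"
  then obtain xs where xs: "xs \<in> env_paths n" "Q xs" "\<omega> \<in> \<Omega>" "\<forall>i\<le>n. w i \<omega> = xs i" by blast
  then have "restrict (\<lambda>i. w i \<omega>) {..n} = xs"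
    by (intro PiE_ext[of _ "{..n}" "\<lambda>_. UNIV"]) (auto simp: env_paths_def)
  then show "\<omega> \<in> {\<omega>\<in>\<Omega>. Q (restrict (\<lambda>i. w i \<omega>) {..n})}"
    using xs by auto
qed

lemma path_event_measure:
  assumes "prob_space M" and "stationary_env_chain M w a b"
  shows "{\<omega>\<in>space M. Q (restrict (\<lambda>i. w i \<omega>) {..n})} \<in> sets M"
    and "measure M {\<omega>\<in>space M. Q (restrict (\<lambda>i. w i \<omega>) {..n})}
         = path_expectation a b n (\<lambda>xs. if Q xs then 1 else 0)"
proof -
  interpret prob_space M by (rule assms(1))
  define cyl where "cyl xs = {\<omega>\<in>space M. \<forall>i\<le>n. w i \<omega> = xs i}" for xs
  define S where "S = {xs\<in>env_paths n. Q xs}"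
  have w_meas: "w i \<in> measurable M (count_space UNIV)" for i
    using assms(2) unfolding stationary_env_chain_def by blast
  have measure_cyl: "measure M (cyl xs) = path_prob a b n xs" for xs
    using assms(2) unfolding stationary_env_chain_def path_prob_def cyl_def by blast
  have "{\<omega>\<in>space M. w i \<omega> = e} \<in> sets M" for i e
    using measurable_sets[OF w_meas, of "{e}"] by (simp add: vimage_def Int_def conj_commute)
  then have "{\<omega>\<in>space M. \<forall>i\<in>{..n}. w i \<omega> = xs i} \<in> sets M" for xs
    by (intro sets.sets_Collect_finite_All) auto
  then have cyl_sets: "cyl xs \<in> sets M" for xs
    by (simp only: cyl_def Ball_def atMost_iff)
  have finite_S: "finite S"
    unfolding S_def using finite_env_paths by simp
  have event_eq: "{\<omega>\<in>space M. Q (restrict (\<lambda>i. w i \<omega>) {..n})} = (\<Union>xs\<in>S. cyl xs)"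
    unfolding S_def cyl_def by (rule path_event_eq_Union_cylinders)
  show "{\<omega>\<in>space M. Q (restrict (\<lambda>i. w i \<omega>) {..n})} \<in> sets M"
    unfolding event_eq using finite_S cyl_sets by auto
  have "disjoint_family_on cyl S"
    using disjoint_family_on_path_cylinders unfolding cyl_def S_def
    by (rule disjoint_family_on_mono[rotated]) auto
  then have "measure M (\<Union>xs\<in>S. cyl xs) = (\<Sum>xs\<in>S. measure M (cyl xs))"
    by (intro measure_finite_Union finite_S) (use cyl_sets emeasure_finite in auto)
  also have "\<dots> = (\<Sum>xs\<in>S. path_prob a b n xs)"
    by (simp add: measure_cyl)
  also have "\<dots> = path_expectation a b n (\<lambda>xs. if Q xs then 1 else 0)"
    unfolding S_def path_expectation_def using finite_env_paths
    by (simp add: sum.inter_filter) (intro sum.cong; simp)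
  finally show "measure M {\<omega>\<in>space M. Q (restrict (\<lambda>i. w i \<omega>) {..n})}
      = path_expectation a b n (\<lambda>xs. if Q xs then 1 else 0)"
    unfolding event_eq .
qed

lemma abs_diff_le_of_bounded_increments:
  fixes f :: "nat \<Rightarrow> real"
  assumes "\<And>n. \<bar>f (Suc n) - f n\<bar> \<le> G"
  shows "\<bar>f (m + d) - f m\<bar> \<le> G * real d"
proof (induction d)
  case (Suc d)
  have "\<bar>f (m + Suc d) - f m\<bar> \<le> \<bar>f (Suc (m + d)) - f (m + d)\<bar> + \<bar>f (m + d) - f m\<bar>"
    by simp
  also have "\<dots> \<le> G + G * real d"
    using assms[of "m + d"] Suc.IH by linarith
  finally show ?case by (simp add: algebra_simps)
qed simp

lemma between_consecutive_squares:
  assumes "1 \<le> (n::nat)"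
  obtains k where "(k+1)\<^sup>2 \<le> n" "n < (k+2)\<^sup>2"
proof -
  have "\<exists>k. (k+1)\<^sup>2 \<le> n \<and> n < (k+2)\<^sup>2"
    using assms
  proof (induction n rule: dec_induct)
    case base
    show ?case by (intro exI[of _ 0]) (simp add: power2_eq_square)
  next
    case (step n)
    then obtain k where k: "(k+1)\<^sup>2 \<le> n" "n < (k+2)\<^sup>2" by blast
    show ?case
    proof (cases "Suc n < (k+2)\<^sup>2")
      case True
      then show ?thesis using k by (intro exI[of _ k]) simp
    next
      case False
      then have "Suc n = (k+2)\<^sup>2" using k by simp
      moreover have "(k+2)\<^sup>2 < (k+3)\<^sup>2" by (simp add: power_strict_mono)
      ultimately show ?thesis by (intro exI[of _ "k+1"]) (simp add: numeral_eq_Suc)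
    qed
  qed
  then show ?thesis using that by blast
qed

lemma lower_bound_between_squares:
  fixes f :: "nat \<Rightarrow> real"
  assumes inc: "\<And>n. \<bar>f (Suc n) - f n\<bar> \<le> G"
    and k: "(k+1)\<^sup>2 \<le> n" "n < (k+2)\<^sup>2"
    and at_square: "\<bar>f ((k+1)\<^sup>2)\<bar> \<le> real ((k+1)\<^sup>2) * (\<delta> / 2)"
    and k_large: "4 * G \<le> \<delta> * real (k+1)"
  shows "- \<delta> * real n \<le> f n"
proof -
  define r where "r = real (k+1)"
  have G_nonneg: "0 \<le> G" using inc[of 0] by linarith
  then have "0 \<le> \<delta> * real (k+1)" using k_large by linarith
  then have "0 \<le> \<delta>" by (simp add: zero_le_mult_iff)
  have "\<bar>f n - f ((k+1)\<^sup>2)\<bar> \<le> G * real (n - (k+1)\<^sup>2)"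
    using abs_diff_le_of_bounded_increments[of f, OF inc, of "(k+1)\<^sup>2" "n - (k+1)\<^sup>2"] k by simp
  also have "\<dots> \<le> G * (2 * r)"
  proof (intro mult_left_mono[OF _ G_nonneg])
    have "n - (k+1)\<^sup>2 \<le> 2 * k + 2"
      using k by (simp add: power2_eq_square algebra_simps)
    then have "real (n - (k+1)\<^sup>2) \<le> real (2 * k + 2)"
      by (simp only: of_nat_le_iff)
    then show "real (n - (k+1)\<^sup>2) \<le> 2 * r" unfolding r_def by simp
  qed
  also have "\<dots> \<le> r\<^sup>2 * (\<delta> / 2)"
    using k_large mult_right_mono[OF k_large, of r] unfolding r_def
    by (simp add: power2_eq_square algebra_simps)
  finally have "f ((k+1)\<^sup>2) - r\<^sup>2 * (\<delta> / 2) \<le> f n" by linarith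
  moreover have "- (r\<^sup>2 * (\<delta> / 2)) \<le> f ((k+1)\<^sup>2)"
    using at_square unfolding r_def by simp
  moreover have "r\<^sup>2 \<le> real n"
    using k(1) unfolding r_def by (metis of_nat_le_iff of_nat_power)
  then have "r\<^sup>2 * (\<delta> / 2) \<le> real n * (\<delta> / 2)"
    using \<open>0 \<le> \<delta>\<close> by (intro mult_right_mono) auto
  moreover have "real n * (\<delta> / 2) = \<delta> * real n / 2" by simp
  ultimately show ?thesis by linarith
qed

text \<open>
  Between \<open>(k+1)\<^sup>2\<close> and \<open>n < (k+2)\<^sup>2\<close> there are only \<open>O(\<surd>n)\<close> steps, so control along the
  squares transfers to all \<open>n\<close> once the increments are bounded.
\<close>

lemma eventually_lower_bound_of_squares:
  fixes f :: "nat \<Rightarrow> real"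
  assumes inc: "\<And>n. \<bar>f (Suc n) - f n\<bar> \<le> G"
    and squares: "\<And>j. eventually (\<lambda>k. \<bar>f ((k+1)\<^sup>2)\<bar> < real ((k+1)\<^sup>2) / real (Suc j)) sequentially"
    and "0 < \<delta>"
  shows "eventually (\<lambda>n. - \<delta> * real n \<le> f n) sequentially"
proof -
  obtain j where j: "inverse (real (Suc j)) < \<delta> / 2"
    using ex_inverse_of_nat_less[of "\<delta> / 2"] \<open>0 < \<delta>\<close> by (metis gr0_implies_Suc half_gt_zero)
  obtain K where K: "\<And>k. K \<le> k \<Longrightarrow> \<bar>f ((k+1)\<^sup>2)\<bar> < real ((k+1)\<^sup>2) / real (Suc j)"
    using squares[of j] unfolding eventually_sequentially by blast
  define K' where "K' = max K (nat \<lceil>4 * G / \<delta>\<rceil>)"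
  show ?thesis
    unfolding eventually_sequentially
  proof (intro exI[of _ "(K'+2)\<^sup>2"] allI impI)
    fix n assume n: "(K'+2)\<^sup>2 \<le> n"
    then have "1 \<le> n" by (simp add: power2_eq_square)
    then obtain k where k: "(k+1)\<^sup>2 \<le> n" "n < (k+2)\<^sup>2"
      by (rule between_consecutive_squares)
    then have "(K'+2)\<^sup>2 < (k+2)\<^sup>2" using n by linarith
    then have "K' \<le> k" using power_less_imp_less_base by fastforce
    show "- \<delta> * real n \<le> f n"
    proof (rule lower_bound_between_squares[of f, OF inc k])
      have "\<bar>f ((k+1)\<^sup>2)\<bar> < real ((k+1)\<^sup>2) * inverse (real (Suc j))"
        using K[of k] \<open>K' \<le> k\<close> unfolding K'_def by (simp add: divide_inverse)
      also have "\<dots> \<le> real ((k+1)\<^sup>2) * (\<delta> / 2)"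
        using j by (intro mult_left_mono) auto
      finally show "\<bar>f ((k+1)\<^sup>2)\<bar> \<le> real ((k+1)\<^sup>2) * (\<delta> / 2)" by simp
      have "4 * G / \<delta> \<le> real k"
        using \<open>K' \<le> k\<close> unfolding K'_def by linarith
      then show "4 * G \<le> \<delta> * real (k+1)"
        using \<open>0 < \<delta>\<close> by (simp add: divide_le_eq algebra_simps)
    qed
  qed
qed

lemma ereal_le_liminf_divide:
  fixes u v :: "nat \<Rightarrow> real"
  assumes lower: "\<And>\<delta>. 0 < \<delta> \<Longrightarrow> eventually (\<lambda>n. (c - \<delta>) * real n \<le> v n) sequentially"
    and offset: "\<And>n. v n + K \<le> u n"
  shows "ereal c \<le> liminf (\<lambda>n. ereal (u n / real n))"
  unfolding le_Liminf_iff
proof (intro allI impI)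
  fix y assume "y < ereal c"
  show "eventually (\<lambda>n. y < ereal (u n / real n)) sequentially"
  proof (cases y)
    case (real r)
    define \<delta> where "\<delta> = (c - r) / 3"
    have "0 < \<delta>" using \<open>y < ereal c\<close> real unfolding \<delta>_def by simp
    obtain N :: nat where N: "- K < real N * \<delta>"
      using reals_Archimedean3[OF \<open>0 < \<delta>\<close>] by blast
    have "eventually (\<lambda>n. (c - \<delta>) * real n \<le> v n \<and> N < n) sequentially"
      using lower[OF \<open>0 < \<delta>\<close>] eventually_gt_at_top by (rule eventually_conj)
    then show ?thesis
    proof (rule eventually_mono, clarify)
      fix n assume n: "(c - \<delta>) * real n \<le> v n" "N < n"
      have "- K < \<delta> * real n"
        using N n(2) \<open>0 < \<delta>\<close> by (smt (verit) mult.commute mult_strict_left_mono of_nat_less_iff)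
      moreover have "(c - \<delta>) * real n = (r + \<delta>) * real n + \<delta> * real n"
        unfolding \<delta>_def by (simp add: field_simps)
      ultimately have "(r + \<delta>) * real n < u n"
        using n(1) offset[of n] by linarith
      moreover have "0 < \<delta> * real n" using n(2) \<open>0 < \<delta>\<close> by simp
      ultimately have "r * real n < u n" by (simp add: distrib_right)
      then have "r < u n / real n" using n(2) by (simp add: less_divide_eq)
      then show "y < ereal (u n / real n)" using real by simp
    qed
  qed (use \<open>y < ereal c\<close> in auto)
qed

context env_chain_functional
begin

lemma AE_deviation_small_on_squares:
  assumes "prob_space M" and "stationary_env_chain M w a b"
  shows "AE \<omega> in M. \<forall>j. eventually (\<lambda>k.
           \<bar>deviation ((k+1)\<^sup>2) (\<lambda>i. w i \<omega>)\<bar> < real ((k+1)\<^sup>2) / real (Suc j)) sequentially"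
proof -
  interpret prob_space M by (rule assms(1))
  define A where "A j k = {\<omega>\<in>space M. real ((k+1)\<^sup>2) * (1 / real (Suc j))
        \<le> \<bar>deviation ((k+1)\<^sup>2) (restrict (\<lambda>i. w i \<omega>) {..(k+1)\<^sup>2})\<bar>}" for j k :: nat
  have A_sets: "A j k \<in> sets M" for j k
    unfolding A_def by (rule path_event_measure(1)[OF assms])
  have A_le: "measure M (A j k) \<le> variance_rate * (real (Suc j))\<^sup>2 * inverse (real (Suc k) ^ 2)" for j k
  proof -
    have "measure M (A j k) = path_expectation a b ((k+1)\<^sup>2) (\<lambda>x.
        if real ((k+1)\<^sup>2) * (1 / real (Suc j)) \<le> \<bar>deviation ((k+1)\<^sup>2) x\<bar> then 1 else 0)"
      unfolding A_def by (rule path_event_measure(2)[OF assms])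
    also have "\<dots> \<le> variance_rate / (real ((k+1)\<^sup>2) * (1 / real (Suc j))\<^sup>2)"
      by (rule path_expectation_large_deviation_le) simp_all
    also have "\<dots> = variance_rate * (real (Suc j))\<^sup>2 * inverse (real (Suc k) ^ 2)"
      by (simp add: divide_inverse power_one_over power_inverse mult_ac)
    finally show ?thesis .
  qed
  have "summable (\<lambda>k. inverse (real (Suc k) ^ 2))"
    using inverse_power_summable[of 2] by (subst summable_Suc_iff) simp
  then have "summable (\<lambda>k. variance_rate * (real (Suc j))\<^sup>2 * inverse (real (Suc k) ^ 2))" for j
    by (rule summable_mult)
  then have "summable (\<lambda>k. measure M (A j k))" for j
    by (rule summable_comparison_test') (use A_le in simp)
  then have "AE \<omega> in M. eventually (\<lambda>k. \<omega> \<in> space M - A j k) sequentially" for j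
    using A_sets emeasure_finite by (intro borel_cantelli_AE1) (auto simp: less_top[symmetric])
  then have "AE \<omega> in M. \<forall>j. eventually (\<lambda>k. \<omega> \<in> space M - A j k) sequentially"
    by (subst AE_all_countable) blast
  then show ?thesis
  proof (rule AE_mp, intro AE_I2 impI allI)
    fix \<omega> j assume "\<omega> \<in> space M" and "\<forall>j. eventually (\<lambda>k. \<omega> \<in> space M - A j k) sequentially"
    then show "eventually (\<lambda>k.
        \<bar>deviation ((k+1)\<^sup>2) (\<lambda>i. w i \<omega>)\<bar> < real ((k+1)\<^sup>2) / real (Suc j)) sequentially"
      by (elim allE[of _ j] eventually_mono) (simp add: A_def deviation_restrict not_le)
  qed
qed

lemma AE_path_sum_lower:
  assumes "prob_space M" and "stationary_env_chain M w a b"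
  shows "AE \<omega> in M. \<forall>\<delta>>0. eventually (\<lambda>n. (\<mu> - \<delta>) * real n \<le> path_sum g n (\<lambda>i. w i \<omega>)) sequentially"
  using AE_deviation_small_on_squares[OF assms]
proof (rule eventually_mono, intro allI impI)
  fix \<omega> and \<delta> :: real
  assume squares: "\<forall>j. eventually (\<lambda>k.
      \<bar>deviation ((k+1)\<^sup>2) (\<lambda>i. w i \<omega>)\<bar> < real ((k+1)\<^sup>2) / real (Suc j)) sequentially"
    and "0 < \<delta>"
  have "eventually (\<lambda>n. - \<delta> * real n \<le> deviation n (\<lambda>i. w i \<omega>)) sequentially"
    using squares \<open>0 < \<delta>\<close>
    by (intro eventually_lower_bound_of_squares[where f="\<lambda>n. deviation n (\<lambda>i. w i \<omega>)",
          OF abs_deviation_increment_le]) auto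
  then show "eventually (\<lambda>n. (\<mu> - \<delta>) * real n \<le> path_sum g n (\<lambda>i. w i \<omega>)) sequentially"
    by (rule eventually_mono) (simp add: deviation_def algebra_simps)
qed

end

subsection \<open>The product of the mean matrices along the favoured patches\<close>

fun favoured_patch :: "env \<Rightarrow> 2" where
  "favoured_patch E1 = 1"
| "favoured_patch E2 = 2"

definition ln_tracking_entry :: "(env \<Rightarrow> 2 \<Rightarrow> real) \<Rightarrow> real \<Rightarrow> real \<Rightarrow> env \<Rightarrow> env \<Rightarrow> real" where
  "ln_tracking_entry m p q u e = ln (Amat m p q e $ favoured_patch e $ favoured_patch u)"

lemma Amat_pos:
  assumes "\<And>s i. 0 < m s i" "0 < p" "p < 1" "0 < q" "q < 1"
  shows "0 < Amat m p q s $ i $ j"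
  using assms(1)[of s i] assms(2-5) unfolding Amat_def dmat_def by simp

lemma prodA_nonneg:
  assumes "\<And>s i. 0 < m s i" "0 < p" "p < 1" "0 < q" "q < 1"
  shows "0 \<le> prodA m p q x n $ i $ j"
proof (induction n arbitrary: i j)
  case 0
  then show ?case using Amat_pos[OF assms] by (simp add: less_imp_le)
next
  case (Suc n)
  then show ?case
    using Amat_pos[OF assms] by (simp add: matrix_matrix_mult_def sum_nonneg less_imp_le)
qed

lemma prodA_ge_path_product:
  fixes x :: "nat \<Rightarrow> env"
  assumes pos: "\<And>s i. 0 < m s i" "0 < p" "p < 1" "0 < q" "q < 1"
  defines "a t \<equiv> Amat m p q (x (Suc t)) $ favoured_patch (x (Suc t)) $ favoured_patch (x t)"
  shows "Amat m p q (x 0) $ favoured_patch (x 0) $ favoured_patch (x 0) * (\<Prod>t<n. a t)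
         \<le> prodA m p q x n $ favoured_patch (x n) $ favoured_patch (x 0)"
proof (induction n)
  case (Suc n)
  let ?A = "Amat m p q (x (Suc n))"
  let ?i = "favoured_patch (x (Suc n))"
  let ?j = "favoured_patch (x 0)"
  have "Amat m p q (x 0) $ ?j $ ?j * (\<Prod>t<Suc n. a t)
      = a n * (Amat m p q (x 0) $ ?j $ ?j * (\<Prod>t<n. a t))"
    by (simp add: mult_ac)
  also have "\<dots> \<le> ?A $ ?i $ favoured_patch (x n) * prodA m p q x n $ favoured_patch (x n) $ ?j"
    unfolding a_def by (rule mult_left_mono[OF Suc.IH[unfolded a_def] less_imp_le[OF Amat_pos[OF pos]]])
  also have "\<dots> \<le> (\<Sum>k\<in>UNIV. ?A $ ?i $ k * prodA m p q x n $ k $ ?j)"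
    by (rule member_le_sum[where f="\<lambda>k. ?A $ ?i $ k * prodA m p q x n $ k $ ?j"])
       (auto intro!: mult_nonneg_nonneg prodA_nonneg[OF pos] less_imp_le[OF Amat_pos[OF pos]])
  also have "\<dots> = prodA m p q x (Suc n) $ ?i $ ?j"
    by (simp add: matrix_matrix_mult_def)
  finally show ?case .
qed simp

lemma abs_entry_le_rownorm: "\<bar>B $ i $ j\<bar> \<le> rownorm B"
proof -
  have "\<bar>B $ i $ j\<bar> \<le> (\<Sum>j\<in>UNIV. \<bar>B $ i $ j\<bar>)" by (rule member_le_sum) auto
  also have "\<dots> \<le> rownorm B" unfolding rownorm_def by (rule Max_ge) auto
  finally show ?thesis .
qed

lemma ln_rownorm_prodA_ge:
  assumes pos: "\<And>s i. 0 < m s i" "0 < p" "p < 1" "0 < q" "q < 1"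
  shows "path_sum (ln_tracking_entry m p q) n x + min (ln (Amat m p q E1 $ 1 $ 1)) (ln (Amat m p q E2 $ 2 $ 2))
         \<le> ln (rownorm (prodA m p q x n))"
proof -
  let ?i = "\<lambda>t. favoured_patch (x t)"
  let ?P = "Amat m p q (x 0) $ ?i 0 $ ?i 0 * (\<Prod>t<n. Amat m p q (x (Suc t)) $ ?i (Suc t) $ ?i t)"
  have P_pos: "0 < ?P" using Amat_pos[OF pos] by (intro mult_pos_pos prod_pos) auto
  have "ln ?P = ln (Amat m p q (x 0) $ ?i 0 $ ?i 0) + path_sum (ln_tracking_entry m p q) n x"
    unfolding path_sum_def ln_tracking_entry_def using Amat_pos[OF pos]
    by (subst ln_mult) (auto intro!: prod_pos simp: ln_prod less_imp_neq[symmetric])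
  moreover have "min (ln (Amat m p q E1 $ 1 $ 1)) (ln (Amat m p q E2 $ 2 $ 2))
      \<le> ln (Amat m p q (x 0) $ ?i 0 $ ?i 0)"
    by (cases "x 0") simp_all
  moreover have "?P \<le> rownorm (prodA m p q x n)"
    using prodA_ge_path_product[where m=m and p=p and q=q and x=x and n=n, OF pos] abs_entry_le_rownorm[of "prodA m p q x n" "?i n" "?i 0"]
    by linarith
  then have "ln ?P \<le> ln (rownorm (prodA m p q x n))"
    using P_pos by (rule ln_mono)
  ultimately show ?thesis by linarith
qed

lemma stationary_mean_ln_tracking_entry:
  assumes pos: "\<And>s i. 0 < m s i" and p: "0 < p" "p < 1" and q: "0 < q" "q < 1"
    and "0 < \<alpha>" "0 < \<beta>"
  shows "stationary_mean \<alpha> \<beta> (ln_tracking_entry m p q) =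
     (let \<nu> = \<beta> / (\<alpha> + \<beta>) in
          \<nu> * ln (m E1 1) + (1 - \<nu>) * ln (m E2 2) + \<nu> * \<alpha> * ln (p * q)
          + \<nu> * (1 - \<alpha>) * ln (1 - p) + (1 - \<nu>) * (1 - \<beta>) * ln (1 - q))"
proof -
  define \<nu> where "\<nu> = \<beta> / (\<alpha> + \<beta>)"
  have "\<alpha> + \<beta> \<noteq> 0" using \<open>0 < \<alpha>\<close> \<open>0 < \<beta>\<close> by simp
  then have init: "init_law \<alpha> \<beta> E1 = \<nu>" "init_law \<alpha> \<beta> E2 = 1 - \<nu>"
    and balance: "(1 - \<nu>) * \<beta> = \<nu> * \<alpha>"
    unfolding \<nu>_def init_law_def by (simp_all add: field_simps)
  have "0 < m E1 1" "0 < m E2 2" using pos by auto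
  then have entries:
    "ln_tracking_entry m p q E1 E1 = ln (m E1 1) + ln (1 - p)"
    "ln_tracking_entry m p q E1 E2 = ln (m E2 2) + ln q"
    "ln_tracking_entry m p q E2 E1 = ln (m E1 1) + ln p"
    "ln_tracking_entry m p q E2 E2 = ln (m E2 2) + ln (1 - q)"
    using p q unfolding ln_tracking_entry_def Amat_def dmat_def by (simp_all add: ln_mult)
  have ln_pq: "ln (p * q) = ln p + ln q" using p q by (simp add: ln_mult)
  show ?thesis
    unfolding stationary_mean_def sum_UNIV_env Let_def \<nu>_def[symmetric] trans_prob_def init entries ln_pq
    using balance by simp algebra
qed

theorem proposition5p4:
  fixes M :: "'a measure" and w :: "nat \<Rightarrow> 'a \<Rightarrow> env"
    and m :: "env \<Rightarrow> 2 \<Rightarrow> real" and p q \<alpha> \<beta> :: real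
  assumes "prob_space M"
    and "0 < p" "p < 1" "0 < q" "q < 1"
    and "0 < \<alpha>" "\<alpha> \<le> 1" "0 < \<beta>" "\<beta> \<le> 1"
    and "\<And>s i. 0 < m s i"
    and "stationary_env_chain M w \<alpha> \<beta>"
  shows "AE \<omega> in M.
     liminf (\<lambda>n. ereal (ln (rownorm (prodA m p q (\<lambda>k. w k \<omega>) n)) / real n))
     \<ge> ereal (let \<nu> = \<beta> / (\<alpha> + \<beta>) in
          \<nu> * ln (m E1 1) + (1 - \<nu>) * ln (m E2 2) + \<nu> * \<alpha> * ln (p * q)
          + \<nu> * (1 - \<alpha>) * ln (1 - p) + (1 - \<nu>) * (1 - \<beta>) * ln (1 - q))"
proof -
  interpret env_chain_functional \<alpha> \<beta> "ln_tracking_entry m p q"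
    using assms(6-9) by unfold_locales
  have "AE \<omega> in M. ereal \<mu> \<le> liminf (\<lambda>n. ereal (ln (rownorm (prodA m p q (\<lambda>k. w k \<omega>) n)) / real n))"
    using AE_path_sum_lower[OF assms(1,11)]
  proof (rule eventually_mono)
    fix \<omega>
    assume lower: "\<forall>\<delta>>0. eventually (\<lambda>n. (\<mu> - \<delta>) * real n
              \<le> path_sum (ln_tracking_entry m p q) n (\<lambda>i. w i \<omega>)) sequentially"
    show "ereal \<mu> \<le> liminf (\<lambda>n. ereal (ln (rownorm (prodA m p q (\<lambda>k. w k \<omega>) n)) / real n))"
      by (rule ereal_le_liminf_divide[OF _ ln_rownorm_prodA_ge[OF assms(10,2-5)]]) (use lower in blast)
  qed
  then show ?thesis
    using stationary_mean_ln_tracking_entry[OF assms(10,2-6,8)] by simp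
qed
end
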